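(* Let $X$ be an infinite-dimensional complex Banach space and $T$ a hyper-recurrent surjective linear isometry of $X$. Then $\overline{\mathrm{Hr}(T)}$ contains an infinite-dimensional $T$-invariant linear subspace.
   Context: $x$ is recurrent if $T^{\omega_n}x\to x$ for some strictly increasing sequence $(\omega_n)$ of positive integers; $\mathrm{Rec}(T)$ is the set of recurrent vectors. $\mathfrak{C}$ is the set of strictly increasing sequences $\omega$ with $T^{\omega_n}x\to x$ for some $x\ne0$; $\mathfrak{L}(\omega)=\{x:T^{\omega_n}x\to x\}$. $\mathrm{Hr}(T)$ is the set of $x\in\mathrm{Rec}(T)$ such that $\mathfrak{L}(\omega)$ is dense for every $\omega\in\mathfrak{C}$ with $x\in\mathfrak{L}(\omega)$; $T$ is hyper-recurrent if $\mathrm{Rec}(T)$ is dense and $\mathrm{Hr}(T)\ne\emptyset$. *)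

theory Defs
  imports "HOL-Analysis.Analysis"
begin

definition complex_banach_structure :: "(complex \<Rightarrow> 'a::banach \<Rightarrow> 'a) \<Rightarrow> bool" where
  "complex_banach_structure smul \<longleftrightarrow>
     Vector_Spaces.vector_space smul \<and>
     (\<forall>r x. smul (complex_of_real r) x = r *\<^sub>R x) \<and>
     (\<forall>c x. norm (smul c x) = cmod c * norm x)"

definition inf_dim_subspace :: "(complex \<Rightarrow> 'a::banach \<Rightarrow> 'a) \<Rightarrow> 'a set \<Rightarrow> bool" where
  "inf_dim_subspace smul M \<longleftrightarrow>
     module.subspace smul M \<and> \<not> (\<exists>B. finite B \<and> module.span smul B = M)"

definition L_set :: "('a::topological_space \<Rightarrow> 'a) \<Rightarrow> (nat \<Rightarrow> nat) \<Rightarrow> 'a set" where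
  "L_set T \<omega> = {x. (\<lambda>n. (T ^^ \<omega> n) x) \<longlonglongrightarrow> x}"

definition Rec :: "('a::topological_space \<Rightarrow> 'a) \<Rightarrow> 'a set" where
  "Rec T = {x. \<exists>\<omega>. strict_mono \<omega> \<and> (\<forall>n. 0 < \<omega> n) \<and> x \<in> L_set T \<omega>}"

definition C_set :: "('a::{topological_space,zero} \<Rightarrow> 'a) \<Rightarrow> (nat \<Rightarrow> nat) set" where
  "C_set T = {\<omega>. strict_mono \<omega> \<and> (\<forall>n. 0 < \<omega> n) \<and> (\<exists>x. x \<noteq> 0 \<and> x \<in> L_set T \<omega>)}"

definition Hr :: "('a::{topological_space,zero} \<Rightarrow> 'a) \<Rightarrow> 'a set" where
  "Hr T = {x \<in> Rec T. \<forall>\<omega> \<in> C_set T. x \<in> L_set T \<omega> \<longrightarrow> closure (L_set T \<omega>) = UNIV}"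

definition hyper_recurrent :: "('a::{topological_space,zero} \<Rightarrow> 'a) \<Rightarrow> bool" where
  "hyper_recurrent T \<longleftrightarrow> closure (Rec T) = UNIV \<and> Hr T \<noteq> {}"

end

theory Submission
  imports Defs "HOL-Computational_Algebra.Fundamental_Theorem_Algebra"
begin

text \<open>Write p(T) for a complex polynomial p applied to T. If some z \<in> Hr(T) is annihilated by no
  nonzero polynomial, its cyclic subspace {p(T) z} is infinite-dimensional and T-invariant, and
  p(T) z lies in the closure of Hr(T): it is the limit as s \<rightarrow> 1+ of p_s(T) z with
  p_s(\<lambda>) = p(s\<lambda>) and s avoiding the moduli of the roots of p. Then p_s has no root on the unit
  circle, so p_s(T) is bounded below and therefore maps Hr(T) into itself.

  Otherwise every element of Hr(T) is annihilated by a polynomial. An isometry has no Jordan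
  chains, so a nonzero x0 \<in> Hr(T) is a finite sum of eigenvectors, and x0 \<in> L(\<omega>) just means
  \<mu>^\<omega>(n) \<rightarrow> 1 for its eigenvalues \<mu>. This condition is stable under small perturbations
  x0 + v, which therefore belong to Hr(T); so every vector is annihilated, hence a finite
  sum of eigenvectors w, and w is a limit of the vectors w + \<epsilon> x0 \<in> Hr(T). Thus Hr(T) is dense
  and the whole space is the required subspace.\<close>

lemma norm_square_minus_one_ge:
  fixes a :: complex
  assumes "cmod a = 1" "cmod (a - 1) < 1/2"
  shows "3/2 * cmod (a - 1) \<le> cmod (a^2 - 1)"
proof -
  have "Re a ^ 2 + Im a ^ 2 = 1" using assms(1) by (metis cmod_power2 power_one)
  then have "cmod (a + 1) ^ 2 + cmod (a - 1) ^ 2 = 4"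
    by (simp add: cmod_power2 power2_sum power2_diff)
  moreover have "cmod (a - 1) ^ 2 \<le> (1/2)^2"
    by (rule power_mono) (use assms(2) in auto)
  ultimately have "(3/2)^2 \<le> cmod (a + 1) ^ 2" unfolding power2_eq_square by linarith
  then have "3/2 \<le> cmod (a + 1)" by (rule power2_le_imp_le) simp
  then have "cmod (a - 1) * (3/2) \<le> cmod (a - 1) * cmod (a + 1)" by (rule mult_left_mono) auto
  moreover have "a^2 - 1 = (a - 1) * (a + 1)" by (simp add: power2_eq_square algebra_simps)
  ultimately show ?thesis by (simp add: norm_mult mult.commute)
qed

lemma norm_pow2_minus_one_ge:
  fixes a :: complex
  assumes "cmod a = 1" "\<forall>i\<le>j. cmod (a^(2^i) - 1) < 1/2"
  shows "(3/2)^j * cmod (a - 1) \<le> cmod (a^(2^j) - 1)"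
  using assms
proof (induct j)
  case (Suc j)
  have "cmod (a^(2^j)) = 1" "cmod (a^(2^j) - 1) < 1/2" using Suc.prems by (auto simp: norm_power)
  then have "3/2 * cmod (a^(2^j) - 1) \<le> cmod ((a^(2^j))^2 - 1)" by (rule norm_square_minus_one_ge)
  moreover have "(a^(2^j))^2 = a^(2^Suc j)" by (metis power_Suc2 power_mult)
  moreover have "(3/2)^j * cmod (a - 1) \<le> cmod (a^(2^j) - 1)" using Suc by auto
  ultimately show ?case by simp
qed simp

text \<open>Near 1 on the unit circle, squaring expands the distance to 1 by a factor 3/2.\<close>
lemma unimodular_tendsto_one:
  fixes \<alpha> :: "nat \<Rightarrow> complex"
  assumes "\<And>n. cmod (\<alpha> n) = 1" "\<And>k. eventually (\<lambda>n. cmod (\<alpha> n ^ k - 1) < 1/2) sequentially"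
  shows "\<alpha> \<longlonglongrightarrow> 1"
proof (rule tendstoI)
  fix e :: real assume e: "0 < e"
  obtain j where j: "1/(2*e) < (3/2::real)^j" using real_arch_pow[of "3/2::real" "1/(2*e)"] by auto
  define P where "P = (3/2::real)^j"
  have "P > 0" by (simp add: P_def)
  have "1 < P * (2*e)" using j e by (simp add: P_def pos_divide_less_eq)
  have "eventually (\<lambda>n. \<forall>i\<in>{..j}. cmod (\<alpha> n ^ (2^i) - 1) < 1/2) sequentially"
    by (rule eventually_ball_finite) (simp, intro ballI assms(2))
  then show "eventually (\<lambda>n. dist (\<alpha> n) 1 < e) sequentially"
  proof (rule eventually_mono)
    fix n assume h: "\<forall>i\<in>{..j}. cmod (\<alpha> n ^ (2^i) - 1) < 1/2"
    then have "P * cmod (\<alpha> n - 1) \<le> cmod (\<alpha> n ^ (2^j) - 1)"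
      using norm_pow2_minus_one_ge[of "\<alpha> n" j] assms(1) by (auto simp: P_def)
    also have "\<dots> < 1/2" using h by auto
    finally have "P * cmod (\<alpha> n - 1) < P * e" using \<open>1 < P * (2*e)\<close> by linarith
    then show "dist (\<alpha> n) 1 < e" using \<open>P > 0\<close> by (simp add: dist_norm)
  qed
qed

lemma limpt_image_in_closure:
  fixes x :: "'a::t1_space"
  assumes "continuous_on UNIV f" "x islimpt S" "finite F" "\<And>s. s \<in> S - F \<Longrightarrow> f s \<in> A"
  shows "f x \<in> closure A"
proof -
  have "S = F \<inter> S \<union> (S - F)" by blast
  with assms(2,3) have "x islimpt (S - F)" by (metis islimpt_Un_finite finite_Int)
  then have "x \<in> closure (S - F)" by (meson islimpt_in_closure closure_mono Diff_subset subsetD)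
  moreover have "f ` closure (S - F) \<subseteq> closure A"
    by (rule image_closure_subset) (use assms(1,4) in \<open>auto intro: continuous_on_subset closure_subset[THEN subsetD]\<close>)
  ultimately show ?thesis by blast
qed

locale complex_isometry =
  fixes smul :: "complex \<Rightarrow> 'a::banach \<Rightarrow> 'a" and T :: "'a \<Rightarrow> 'a"
  assumes complex_banach: "complex_banach_structure smul"
    and linear: "Vector_Spaces.linear smul smul T"
    and isometric: "\<And>x. norm (T x) = norm x"
begin

sublocale V: vector_space smul
  using complex_banach by (simp add: complex_banach_structure_def)

sublocale L: Vector_Spaces.linear smul smul T
  by (rule linear)

lemma norm_cscale: "norm (smul c x) = cmod c * norm x"
  using complex_banach by (simp add: complex_banach_structure_def)

lemma norm_cscale_diff: "norm (smul a x - smul b x) = cmod (a - b) * norm x"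
  by (metis V.scale_left_diff_distrib norm_cscale)

lemma tendsto_cscale:
  assumes "(f \<longlongrightarrow> a) F" shows "((\<lambda>n. smul (f n) x) \<longlongrightarrow> smul a x) F"
proof -
  have "((\<lambda>n. cmod (f n - a) * norm x) \<longlongrightarrow> 0) F"
    using assms by (intro tendsto_mult_left_zero tendsto_norm_zero LIM_zero)
  then have "((\<lambda>n. norm (smul (f n) x - smul a x)) \<longlongrightarrow> 0) F"
    by (simp add: norm_cscale_diff)
  then show ?thesis by (simp add: tendsto_norm_zero_iff LIM_zero_iff)
qed

lemma continuous_on_cscale:
  "continuous_on S f \<Longrightarrow> continuous_on S (\<lambda>s. smul (f s) x)"
  unfolding continuous_on_def by (blast intro: tendsto_cscale)

lemma Tn_add: "(T^^n) (x + y) = (T^^n) x + (T^^n) y"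
  by (induct n) (auto simp: L.add)

lemma Tn_scale: "(T^^n) (smul c x) = smul c ((T^^n) x)"
  by (induct n) (auto simp: L.scale)

lemma Tn_zero: "(T^^n) 0 = 0"
  by (induct n) (auto simp: L.zero)

lemma Tn_diff: "(T^^n) (x - y) = (T^^n) x - (T^^n) y"
  by (induct n) (auto simp: L.diff)

lemma Tn_sum: "(T^^n) (sum f A) = (\<Sum>a\<in>A. (T^^n) (f a))"
  by (induct A rule: infinite_finite_induct) (auto simp: Tn_zero Tn_add)

lemma norm_Tn: "norm ((T^^n) x) = norm x"
  by (induct n) (auto simp: isometric)

lemma norm_Tn_diff: "norm ((T^^n) x - (T^^n) y) = norm (x - y)"
  by (simp only: Tn_diff[symmetric] norm_Tn)

lemma Tn_commute: "(T^^k) ((T^^n) u) = (T^^n) ((T^^k) u)"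
  by (metis add.commute comp_apply funpow_add)

subsection \<open>Polynomials in T\<close>

definition poly_op :: "complex poly \<Rightarrow> 'a \<Rightarrow> 'a" where
  "poly_op p u = (\<Sum>k\<le>degree p. smul (coeff p k) ((T^^k) u))"

lemma poly_op_upto:
  assumes "degree p \<le> N"
  shows "poly_op p u = (\<Sum>k\<le>N. smul (coeff p k) ((T^^k) u))"
  unfolding poly_op_def
  by (rule sum.mono_neutral_left) (use assms in \<open>auto intro!: coeff_eq_0\<close>)

lemma poly_op_0 [simp]: "poly_op 0 u = 0"
  by (simp add: poly_op_def)

lemma poly_op_const: "poly_op [:a:] u = smul a u"
  by (simp add: poly_op_def)

lemma poly_op_add: "poly_op (p + q) u = poly_op p u + poly_op q u"
  by (subst (1 2 3) poly_op_upto[where N = "max (degree p) (degree q)"])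
     (auto simp: degree_add_le sum.distrib V.scale_left_distrib)

lemma poly_op_diff: "poly_op (p - q) u = poly_op p u - poly_op q u"
  by (metis poly_op_add diff_add_cancel eq_diff_eq)

lemma poly_op_smult: "poly_op (smult a p) u = smul a (poly_op p u)"
  by (subst (1 2) poly_op_upto[where N = "degree p"]) (auto simp: V.scale_sum_right)

lemma poly_op_sum: "poly_op (\<Sum>i\<in>A. f i) u = (\<Sum>i\<in>A. poly_op (f i) u)"
  by (induct A rule: infinite_finite_induct) (auto simp: poly_op_add)

lemma poly_op_pCons: "poly_op (pCons a p) u = smul a u + T (poly_op p u)"
proof -
  have "poly_op (pCons a p) u = (\<Sum>k\<le>Suc (degree p). smul (coeff (pCons a p) k) ((T^^k) u))"
    by (rule poly_op_upto) (simp add: degree_pCons_le)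
  also have "\<dots> = smul a u + T (poly_op p u)"
    by (subst sum.atMost_Suc_shift) (simp add: poly_op_def L.sum L.scale)
  finally show ?thesis .
qed

lemma poly_op_monom: "poly_op (monom a k) u = smul a ((T^^k) u)"
  by (induct k) (auto simp: monom_Suc poly_op_pCons poly_op_const L.scale monom_0)

lemma poly_op_mult: "poly_op (p * q) u = poly_op p (poly_op q u)"
  by (induct p rule: pCons_induct) (simp_all add: poly_op_add poly_op_smult poly_op_pCons)

lemma poly_op_linear_factor: "poly_op ([:-r, 1:] * q) u = T (poly_op q u) - smul r (poly_op q u)"
  by (simp only: poly_op_mult) (simp add: poly_op_pCons poly_op_const L.scale)

lemma poly_op_right_add: "poly_op p (u + v) = poly_op p u + poly_op p v"
  by (simp add: poly_op_def Tn_add V.scale_right_distrib sum.distrib)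

lemma poly_op_right_scale: "poly_op p (smul c u) = smul c (poly_op p u)"
  by (simp add: poly_op_def Tn_scale V.scale_sum_right mult.commute)

lemma poly_op_right_diff: "poly_op p (u - v) = poly_op p u - poly_op p v"
  by (simp add: poly_op_def Tn_diff V.scale_right_diff_distrib sum_subtractf)

lemma poly_op_right_zero [simp]: "poly_op p 0 = 0"
  by (simp add: poly_op_def Tn_zero)

lemma poly_op_right_sum: "poly_op p (sum f A) = (\<Sum>a\<in>A. poly_op p (f a))"
  by (induct A rule: infinite_finite_induct) (auto simp: poly_op_right_add)

lemma poly_op_Tn: "poly_op p ((T^^n) u) = (T^^n) (poly_op p u)"
  unfolding poly_op_def Tn_sum Tn_scale by (simp add: Tn_commute)

lemma norm_poly_op_le: "norm (poly_op p u) \<le> (\<Sum>k\<le>degree p. cmod (coeff p k)) * norm u"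
  unfolding poly_op_def sum_distrib_right
  by (rule order_trans[OF norm_sum]) (simp add: norm_cscale norm_Tn)

lemma Tn_eigen: "T c = smul \<mu> c \<Longrightarrow> (T^^n) c = smul (\<mu>^n) c"
  by (induct n) (auto simp: L.scale)

lemma poly_op_eigen: "T c = smul \<mu> c \<Longrightarrow> poly_op p c = smul (poly p \<mu>) c"
  by (induct p rule: pCons_induct) (simp_all add: poly_op_pCons L.scale V.scale_left_distrib mult.commute)

lemma norm_T_minus_scale_ge: "\<bar>1 - cmod r\<bar> * norm w \<le> norm (T w - smul r w)"
proof -
  have "norm (T w) - norm (smul r w) = (1 - cmod r) * norm w"
    by (simp add: isometric norm_cscale algebra_simps)
  moreover have "\<bar>norm (T w) - norm (smul r w)\<bar> \<le> norm (T w - smul r w)"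
    by (rule norm_triangle_ineq3)
  ultimately show ?thesis by (simp add: abs_mult)
qed

text \<open>Each linear factor T - r with |r| \<noteq> 1 is bounded below by the previous lemma.\<close>
lemma poly_op_bounded_below:
  assumes "p \<noteq> 0" "\<And>\<zeta>. cmod \<zeta> = 1 \<Longrightarrow> poly p \<zeta> \<noteq> 0"
  shows "\<exists>c>0. \<forall>u. c * norm u \<le> norm (poly_op p u)"
  using assms
proof (induct "degree p" arbitrary: p rule: less_induct)
  case less
  show ?case
  proof (cases "degree p = 0")
    case True
    then obtain a where p: "p = [:a:]" by (metis degree_eq_zeroE)
    with less have "a \<noteq> 0" by auto
    then show ?thesis by (intro exI[of _ "cmod a"]) (auto simp: p poly_op_const norm_cscale)
  next
    case False
    then obtain r where "poly p r = 0"
      by (metis fundamental_theorem_of_algebra constant_degree)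
    then obtain q where pq: "p = [:-r, 1:] * q" by (metis dvdE poly_eq_0_iff_dvd)
    with less.prems have "q \<noteq> 0" "cmod r \<noteq> 1" "\<And>\<zeta>. cmod \<zeta> = 1 \<Longrightarrow> poly q \<zeta> \<noteq> 0"
      by (auto simp: poly_mult)
    moreover have "degree q < degree p"
      using \<open>q \<noteq> 0\<close> unfolding pq by (subst degree_mult_eq) auto
    ultimately obtain c where c: "c > 0" "\<And>u. c * norm u \<le> norm (poly_op q u)"
      using less.hyps by blast
    have "\<bar>1 - cmod r\<bar> * c * norm u \<le> norm (poly_op p u)" for u
    proof -
      have "\<bar>1 - cmod r\<bar> * (c * norm u) \<le> \<bar>1 - cmod r\<bar> * norm (poly_op q u)"
        using c by (simp add: mult_left_mono)
      also have "\<dots> \<le> norm (poly_op p u)"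
        unfolding pq poly_op_linear_factor by (rule norm_T_minus_scale_ge)
      finally show ?thesis by (simp add: mult.assoc)
    qed
    then show ?thesis using c \<open>cmod r \<noteq> 1\<close> by (intro exI[of _ "\<bar>1 - cmod r\<bar> * c"]) auto
  qed
qed

subsection \<open>Finite sums of eigenvectors\<close>

lemma eigenvalue_unimodular: "T c = smul \<mu> c \<Longrightarrow> c \<noteq> 0 \<Longrightarrow> cmod \<mu> = 1"
  using isometric[of c] by (simp add: norm_cscale)

text \<open>Along a Jordan chain the orbit of b would grow linearly.\<close>
lemma no_Jordan_chain:
  assumes b: "T b = smul \<mu> b + a" and a: "T a = smul \<mu> a"
  shows "a = 0"
proof (rule ccontr)
  assume "a \<noteq> 0"
  with a have \<mu>: "cmod \<mu> = 1" by (rule eigenvalue_unimodular)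
  have orbit: "(T^^Suc n) b = smul (\<mu>^Suc n) b + smul (of_nat (Suc n) * \<mu>^n) a" for n
  proof (induct n)
    case (Suc n)
    have "(T^^Suc (Suc n)) b = smul (\<mu>^Suc n) (smul \<mu> b + a) + smul (of_nat (Suc n) * \<mu>^n) (smul \<mu> a)"
      using Suc by (simp add: L.add L.scale b a)
    also have "\<dots> = smul (\<mu>^Suc (Suc n)) b + smul (\<mu>^Suc n + of_nat (Suc n) * \<mu>^Suc n) a"
      by (simp add: V.scale_right_distrib V.scale_left_distrib mult_ac)
    finally show ?case by (simp add: algebra_simps)
  qed (simp add: b)
  obtain n where "2 * norm b < real n * norm a"
    using \<open>a \<noteq> 0\<close> reals_Archimedean3[of "norm a"] by auto
  then have n: "2 * norm b < real (Suc n) * norm a"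
    by (rule less_le_trans) (simp add: mult_right_mono)
  have "real (Suc n) * norm a = norm ((T^^Suc n) b - smul (\<mu>^Suc n) b)"
    by (simp only: orbit add_diff_cancel_left' norm_cscale norm_mult norm_power \<mu> norm_of_nat) simp
  also have "\<dots> \<le> norm ((T^^Suc n) b) + norm (smul (\<mu>^Suc n) b)" by (rule norm_triangle_ineq4)
  also have "\<dots> = 2 * norm b" by (simp only: norm_Tn norm_cscale norm_power \<mu>) simp
  finally show False using n by simp
qed

definition eigen_sum :: "'a \<Rightarrow> bool" where
  "eigen_sum u \<longleftrightarrow> (\<exists>\<Lambda> e. finite \<Lambda> \<and> u = (\<Sum>\<mu>\<in>\<Lambda>. e \<mu>) \<and> (\<forall>\<mu>\<in>\<Lambda>. T (e \<mu>) = smul \<mu> (e \<mu>)))"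

definition annihilated :: "'a \<Rightarrow> bool" where
  "annihilated u \<longleftrightarrow> (\<exists>p. p \<noteq> 0 \<and> poly_op p u = 0)"

lemma eigen_sum_0: "eigen_sum 0"
  unfolding eigen_sum_def by (intro exI[of _ "{}"]) auto

lemma eigen_sum_add_eigenvector:
  assumes "eigen_sum u" "T b = smul \<mu> b"
  shows "eigen_sum (u + b)"
proof -
  obtain \<Lambda> e where L: "finite \<Lambda>" "u = (\<Sum>\<nu>\<in>\<Lambda>. e \<nu>)" "\<forall>\<nu>\<in>\<Lambda>. T (e \<nu>) = smul \<nu> (e \<nu>)"
    using assms(1) unfolding eigen_sum_def by blast
  define z where "z = (if \<mu> \<in> \<Lambda> then e \<mu> else 0)"
  define e' where "e' = e(\<mu> := z + b)"
  have "u = z + (\<Sum>\<nu>\<in>\<Lambda>-{\<mu>}. e \<nu>)"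
    using L(1,2) by (auto simp: z_def sum.remove)
  moreover have "(\<Sum>\<nu>\<in>insert \<mu> \<Lambda>. e' \<nu>) = e' \<mu> + (\<Sum>\<nu>\<in>\<Lambda>-{\<mu>}. e \<nu>)"
    using L(1) by (simp add: sum.insert_remove e'_def)
  ultimately have "u + b = (\<Sum>\<nu>\<in>insert \<mu> \<Lambda>. e' \<nu>)"
    by (simp add: e'_def algebra_simps)
  moreover have "\<forall>\<nu>\<in>insert \<mu> \<Lambda>. T (e' \<nu>) = smul \<nu> (e' \<nu>)"
    using L(3) assms(2) by (auto simp: e'_def z_def L.add V.scale_right_distrib)
  ultimately show ?thesis unfolding eigen_sum_def using L(1) by blast
qed

text \<open>Peel off a root r of the annihilating polynomial; a repeated root would produce a
  Jordan chain.\<close>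
lemma annihilated_imp_eigen_sum:
  fixes p :: "complex poly"
  assumes "p \<noteq> 0" "poly_op p u = 0"
  shows "eigen_sum u"
  using assms
proof (induct "degree p" arbitrary: p u rule: less_induct)
  case less
  show ?case
  proof (cases "degree p = 0")
    case True
    then obtain a where "p = [:a:]" by (metis degree_eq_zeroE)
    with less.prems show ?thesis by (simp add: poly_op_const eigen_sum_0)
  next
    case False
    then obtain r where "poly p r = 0"
      by (metis fundamental_theorem_of_algebra constant_degree)
    then obtain q where pq: "p = [:-r, 1:] * q" by (metis dvdE poly_eq_0_iff_dvd)
    with less.prems have "q \<noteq> 0" by auto
    moreover have "degree q < degree p"
      using \<open>q \<noteq> 0\<close> unfolding pq by (subst degree_mult_eq) auto
    ultimately have IH: "\<And>v. poly_op q v = 0 \<Longrightarrow> eigen_sum v"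
      using less.hyps by blast
    define a where "a = poly_op q u"
    have Ta: "T a = smul r a"
      using less.prems(2) unfolding pq poly_op_linear_factor a_def by simp
    show ?thesis
    proof (cases "poly q r = 0")
      case False
      define b where "b = smul (inverse (poly q r)) a"
      have "poly_op q (u - b) = a - smul (inverse (poly q r)) (smul (poly q r) a)"
        by (simp add: b_def poly_op_right_diff poly_op_right_scale poly_op_eigen[OF Ta] flip: a_def)
      then have "poly_op q (u - b) = 0" using False by simp
      moreover have "T b = smul r b" by (simp add: b_def L.scale Ta mult.commute)
      ultimately have "eigen_sum (u - b + b)" by (intro eigen_sum_add_eigenvector IH)
      then show ?thesis by simp
    next
      case True
      then obtain q2 where "q = [:-r, 1:] * q2" by (metis dvdE poly_eq_0_iff_dvd)
      then have "a = T (poly_op q2 u) - smul r (poly_op q2 u)"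
        unfolding a_def by (simp only: poly_op_linear_factor)
      then have "T (poly_op q2 u) = smul r (poly_op q2 u) + a" by simp
      then have "a = 0" using no_Jordan_chain Ta by blast
      then show ?thesis by (intro IH) (simp add: a_def)
    qed
  qed
qed

lemma eigen_sum_normal_form:
  assumes "eigen_sum u"
  obtains \<Lambda> e where "finite \<Lambda>" "u = (\<Sum>\<mu>\<in>\<Lambda>. e \<mu>)" "\<And>\<mu>. T (e \<mu>) = smul \<mu> (e \<mu>)"
    "\<And>\<mu>. \<mu> \<in> \<Lambda> \<longleftrightarrow> e \<mu> \<noteq> 0"
proof -
  obtain \<Lambda> e where L: "finite \<Lambda>" "u = (\<Sum>\<mu>\<in>\<Lambda>. e \<mu>)" "\<forall>\<mu>\<in>\<Lambda>. T (e \<mu>) = smul \<mu> (e \<mu>)"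
    using assms unfolding eigen_sum_def by blast
  define \<Lambda>' where "\<Lambda>' = {\<mu>\<in>\<Lambda>. e \<mu> \<noteq> 0}"
  define e' where "e' \<mu> = (if \<mu> \<in> \<Lambda>' then e \<mu> else 0)" for \<mu>
  have "u = (\<Sum>\<mu>\<in>\<Lambda>'. e \<mu>)"
    unfolding L(2) by (rule sum.mono_neutral_right) (use L(1) in \<open>auto simp: \<Lambda>'_def\<close>)
  also have "\<dots> = (\<Sum>\<mu>\<in>\<Lambda>'. e' \<mu>)" by (rule sum.cong) (auto simp: e'_def)
  finally have "u = (\<Sum>\<mu>\<in>\<Lambda>'. e' \<mu>)" .
  then show ?thesis
    using L by (intro that[of \<Lambda>' e']) (auto simp: \<Lambda>'_def e'_def)
qed

text \<open>Lagrange interpolation at the eigenvalues.\<close>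
lemma poly_op_extracts_eigencomponent:
  assumes "finite \<Lambda>" "\<forall>\<nu>\<in>\<Lambda>. T (e \<nu>) = smul \<nu> (e \<nu>)" "\<mu> \<in> \<Lambda>"
  shows "\<exists>q. poly_op q (\<Sum>\<nu>\<in>\<Lambda>. e \<nu>) = e \<mu>"
proof -
  define q where "q = smult (inverse (\<Prod>\<nu>\<in>\<Lambda>-{\<mu>}. \<mu> - \<nu>)) (\<Prod>\<nu>\<in>\<Lambda>-{\<mu>}. [:-\<nu>, 1:])"
  have q: "poly q x = inverse (\<Prod>\<nu>\<in>\<Lambda>-{\<mu>}. \<mu> - \<nu>) * (\<Prod>\<nu>\<in>\<Lambda>-{\<mu>}. x - \<nu>)" for x
    by (simp add: q_def poly_prod)
  have "poly_op q (\<Sum>\<nu>\<in>\<Lambda>. e \<nu>) = (\<Sum>\<nu>\<in>\<Lambda>. smul (poly q \<nu>) (e \<nu>))"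
    using assms(2) by (auto intro!: sum.cong simp: poly_op_right_sum poly_op_eigen)
  also have "\<dots> = smul (poly q \<mu>) (e \<mu>)"
    using assms(1,3) by (subst sum.remove) (auto simp: q intro!: sum.neutral)
  also have "poly q \<mu> = 1" using assms(1) by (simp add: q)
  finally show ?thesis by auto
qed

subsection \<open>The sets L(\<omega>)\<close>

lemma L_set_iff_norm: "x \<in> L_set T \<omega> \<longleftrightarrow> (\<lambda>n. norm ((T^^\<omega> n) x - x)) \<longlonglongrightarrow> 0"
  by (simp add: L_set_def tendsto_norm_zero_iff LIM_zero_iff)

lemma zero_in_L_set: "0 \<in> L_set T \<omega>"
  by (simp add: L_set_def Tn_zero)

lemma norm_Tn_displacement_le:
  "norm ((T^^m) x - x) \<le> norm ((T^^m) y - y) + 2 * norm (x - y)"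
proof -
  have "(T^^m) x - x = ((T^^m) y - y) + ((T^^m) (x - y) - (x - y))"
    by (simp add: Tn_diff)
  then have "norm ((T^^m) x - x) \<le> norm ((T^^m) y - y) + norm ((T^^m) (x - y) - (x - y))"
    by (simp only: norm_triangle_ineq)
  moreover have "norm ((T^^m) (x - y) - (x - y)) \<le> 2 * norm (x - y)"
    using norm_triangle_ineq4[of "(T^^m) (x - y)" "x - y"] by (simp add: norm_Tn)
  ultimately show ?thesis by linarith
qed

lemma closed_L_set: "closed (L_set T \<omega>)"
proof -
  have "x \<in> L_set T \<omega>" if x: "x \<in> closure (L_set T \<omega>)" for x
    unfolding L_set_def mem_Collect_eq
  proof (rule tendstoI)
    fix e :: real assume "0 < e"
    then have "e/3 > 0" by simp
    then obtain y where y: "y \<in> L_set T \<omega>" "dist y x < e/3"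
      using x unfolding closure_approachable by blast
    then have "eventually (\<lambda>n. dist ((T^^\<omega> n) y) y < e/3) sequentially"
      using \<open>e/3 > 0\<close> by (intro tendstoD) (simp_all add: L_set_def)
    then show "eventually (\<lambda>n. dist ((T^^\<omega> n) x) x < e) sequentially"
    proof (rule eventually_mono)
      fix n assume "dist ((T^^\<omega> n) y) y < e/3"
      with y(2) norm_Tn_displacement_le[of "\<omega> n" x y]
      show "dist ((T^^\<omega> n) x) x < e" by (simp add: dist_norm norm_minus_commute)
    qed
  qed
  then show ?thesis using closure_subset_eq by blast
qed

lemma poly_op_in_L_set:
  assumes "x \<in> L_set T \<omega>" shows "poly_op p x \<in> L_set T \<omega>"
  unfolding L_set_iff_norm
proof (rule Lim_null_comparison)
  let ?B = "\<Sum>k\<le>degree p. cmod (coeff p k)"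
  show "eventually (\<lambda>n. norm (norm ((T^^\<omega> n) (poly_op p x) - poly_op p x)) \<le> ?B * norm ((T^^\<omega> n) x - x)) sequentially"
    by (intro always_eventually allI) (simp add: norm_poly_op_le flip: poly_op_Tn poly_op_right_diff)
  show "(\<lambda>n. ?B * norm ((T^^\<omega> n) x - x)) \<longlonglongrightarrow> 0"
    using assms unfolding L_set_iff_norm by (rule tendsto_mult_right_zero)
qed

lemma L_set_multiple:
  assumes "x \<in> L_set T \<omega>" shows "(\<lambda>n. (T^^(k * \<omega> n)) x) \<longlonglongrightarrow> x"
proof (induct k)
  case (Suc k)
  have lim: "(\<lambda>n. norm ((T^^(k * \<omega> n)) x - x) + norm ((T^^\<omega> n) x - x)) \<longlonglongrightarrow> 0"
  proof (rule tendsto_add_zero)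
    show "(\<lambda>n. norm ((T^^(k * \<omega> n)) x - x)) \<longlonglongrightarrow> 0"
      using Suc by (simp add: tendsto_norm_zero_iff LIM_zero_iff)
    show "(\<lambda>n. norm ((T^^\<omega> n) x - x)) \<longlonglongrightarrow> 0"
      using assms by (simp add: L_set_iff_norm)
  qed
  have "norm (norm ((T^^(Suc k * \<omega> n)) x - x)) \<le> norm ((T^^(k * \<omega> n)) x - x) + norm ((T^^\<omega> n) x - x)" for n
  proof -
    have "(T^^(Suc k * \<omega> n)) x = (T^^\<omega> n) ((T^^(k * \<omega> n)) x)"
      by (simp add: funpow_add)
    then have "norm ((T^^(Suc k * \<omega> n)) x - x)
        \<le> norm ((T^^\<omega> n) ((T^^(k * \<omega> n)) x) - (T^^\<omega> n) x) + norm ((T^^\<omega> n) x - x)"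
      by (metis diff_add_cancel add_diff_eq norm_triangle_ineq)
    then show ?thesis by (simp only: norm_Tn_diff real_norm_def abs_norm_cancel)
  qed
  then have "(\<lambda>n. norm ((T^^(Suc k * \<omega> n)) x - x)) \<longlonglongrightarrow> 0"
    by (intro Lim_null_comparison[OF always_eventually lim] allI)
  then show ?case by (simp add: tendsto_norm_zero_iff LIM_zero_iff)
qed simp

lemma eigenvector_in_L_setD:
  assumes "T e = smul \<mu> e" "e \<noteq> 0" "e \<in> L_set T \<omega>"
  shows "(\<lambda>n. \<mu>^(\<omega> n)) \<longlonglongrightarrow> 1"
proof -
  have "(\<lambda>n. norm ((T^^\<omega> n) e - e) / norm e) \<longlonglongrightarrow> 0"
    using assms(3) unfolding L_set_iff_norm by (rule tendsto_divide_zero)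
  moreover have "norm ((T^^k) e - e) = cmod (\<mu>^k - 1) * norm e" for k
    using norm_cscale_diff[of "\<mu>^k" e 1] by (simp add: Tn_eigen[OF assms(1)])
  ultimately have "(\<lambda>n. cmod (\<mu>^(\<omega> n) - 1)) \<longlonglongrightarrow> 0" using assms(2) by simp
  then show ?thesis by (simp add: tendsto_norm_zero_iff LIM_zero_iff)
qed

lemma eigen_sum_in_L_setI:
  assumes "finite \<Lambda>" "\<And>\<mu>. \<mu> \<in> \<Lambda> \<Longrightarrow> T (e \<mu>) = smul \<mu> (e \<mu>)"
    "\<And>\<mu>. \<mu> \<in> \<Lambda> \<Longrightarrow> (\<lambda>n. \<mu>^(\<omega> n)) \<longlonglongrightarrow> 1"
  shows "(\<Sum>\<mu>\<in>\<Lambda>. e \<mu>) \<in> L_set T \<omega>"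
proof -
  have "(\<lambda>n. \<Sum>\<mu>\<in>\<Lambda>. smul (\<mu>^(\<omega> n)) (e \<mu>)) \<longlonglongrightarrow> (\<Sum>\<mu>\<in>\<Lambda>. smul 1 (e \<mu>))"
    by (intro tendsto_sum tendsto_cscale assms(3))
  moreover have "(T^^k) (\<Sum>\<mu>\<in>\<Lambda>. e \<mu>) = (\<Sum>\<mu>\<in>\<Lambda>. smul (\<mu>^k) (e \<mu>))" for k
    unfolding Tn_sum by (rule sum.cong) (simp_all add: Tn_eigen assms(2))
  ultimately show ?thesis by (simp add: L_set_def)
qed

lemma eigen_sum_in_L_setD:
  assumes "finite \<Lambda>" "\<forall>\<nu>\<in>\<Lambda>. T (e \<nu>) = smul \<nu> (e \<nu>)" "(\<Sum>\<nu>\<in>\<Lambda>. e \<nu>) \<in> L_set T \<omega>"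
    "\<mu> \<in> \<Lambda>" "e \<mu> \<noteq> 0"
  shows "(\<lambda>n. \<mu>^(\<omega> n)) \<longlonglongrightarrow> 1"
proof -
  obtain q where "poly_op q (\<Sum>\<nu>\<in>\<Lambda>. e \<nu>) = e \<mu>"
    using poly_op_extracts_eigencomponent assms(1,2,4) by blast
  then have "e \<mu> \<in> L_set T \<omega>" using poly_op_in_L_set[OF assms(3), of q] by simp
  then show ?thesis using assms(2,4,5) by (intro eigenvector_in_L_setD) auto
qed

lemma eigencomponent_displacement_le:
  assumes "poly_op q x = c" "T c = smul \<mu> c"
  shows "cmod (\<mu>^m - 1) * norm c \<le> (\<Sum>k\<le>degree q. cmod (coeff q k)) * norm ((T^^m) x - x)"
proof -
  have "cmod (\<mu>^m - 1) * norm c = norm ((T^^m) c - c)"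
    using norm_cscale_diff[of "\<mu>^m" c 1] by (simp add: Tn_eigen[OF assms(2)])
  also have "(T^^m) c - c = poly_op q ((T^^m) x - x)"
    using assms(1) by (simp add: poly_op_right_diff poly_op_Tn)
  finally show ?thesis using norm_poly_op_le by simp
qed

text \<open>If x + v \<in> L(\<omega>), the displacements of x along the multiples k \<omega>(n) are eventually
  small, hence so are those of its eigencomponent c, and every power of \<mu> stays near 1 along \<omega>.\<close>
lemma eigenvalue_powers_tendsto_one:
  assumes "poly_op q x = c" "T c = smul \<mu> c" "c \<noteq> 0"
    and small: "2 * ((\<Sum>k\<le>degree q. cmod (coeff q k)) * norm v) \<le> norm c / 4"
    and "x + v \<in> L_set T \<omega>"
  shows "(\<lambda>n. \<mu>^(\<omega> n)) \<longlonglongrightarrow> 1"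
proof (rule unimodular_tendsto_one)
  show "cmod (\<mu>^(\<omega> n)) = 1" for n
    using eigenvalue_unimodular[OF assms(2,3)] by (simp add: norm_power)
  fix k
  define B where "B = (\<Sum>k\<le>degree q. cmod (coeff q k))"
  have "B \<ge> 0" by (simp add: B_def sum_nonneg)
  have "(\<lambda>n. B * norm ((T^^(k * \<omega> n)) (x + v) - (x + v))) \<longlonglongrightarrow> 0"
    using L_set_multiple[OF assms(5), of k]
    by (intro tendsto_mult_right_zero) (simp add: tendsto_norm_zero_iff LIM_zero_iff)
  then have "eventually (\<lambda>n. B * norm ((T^^(k * \<omega> n)) (x + v) - (x + v)) < norm c / 4) sequentially"
    using assms(3) by (intro order_tendstoD(2)) auto
  then show "eventually (\<lambda>n. cmod ((\<mu>^(\<omega> n))^k - 1) < 1/2) sequentially"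
  proof (rule eventually_mono)
    fix n
    define m where "m = k * \<omega> n"
    assume "B * norm ((T^^(k * \<omega> n)) (x + v) - (x + v)) < norm c / 4"
    then have "B * norm ((T^^m) (x + v) - (x + v)) < norm c / 4" by (simp add: m_def)
    moreover have "cmod (\<mu>^m - 1) * norm c \<le> B * norm ((T^^m) x - x)"
      unfolding B_def by (rule eigencomponent_displacement_le[OF assms(1,2)])
    moreover have "B * norm ((T^^m) x - x) \<le> B * norm ((T^^m) (x + v) - (x + v)) + 2 * (B * norm v)"
      using mult_left_mono[OF norm_Tn_displacement_le[of m x "x + v"] \<open>B \<ge> 0\<close>]
      by (simp add: algebra_simps)
    ultimately have "cmod (\<mu>^m - 1) * norm c < 1/2 * norm c" using small by (simp add: B_def)
    then show "cmod ((\<mu>^(\<omega> n))^k - 1) < 1/2"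
      using assms(3) by (simp add: m_def mult.commute[of k] power_mult)
  qed
qed

lemma eigen_sum_L_set_perturbation:
  assumes "finite \<Lambda>" "x0 = (\<Sum>\<mu>\<in>\<Lambda>. c \<mu>)" "\<And>\<mu>. T (c \<mu>) = smul \<mu> (c \<mu>)"
    "\<And>\<mu>. \<mu> \<in> \<Lambda> \<Longrightarrow> c \<mu> \<noteq> 0"
  obtains \<delta> where "\<delta> > 0" "\<And>v \<omega>. norm v < \<delta> \<Longrightarrow> x0 + v \<in> L_set T \<omega> \<Longrightarrow> x0 \<in> L_set T \<omega>"
proof -
  have "\<forall>\<mu>\<in>\<Lambda>. \<exists>q. poly_op q x0 = c \<mu>"
    using poly_op_extracts_eigencomponent[OF assms(1)] assms(2,3) by blast
  then obtain Q where Q: "\<And>\<mu>. \<mu> \<in> \<Lambda> \<Longrightarrow> poly_op (Q \<mu>) x0 = c \<mu>" by metis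
  define B where "B \<mu> = (\<Sum>k\<le>degree (Q \<mu>). cmod (coeff (Q \<mu>) k))" for \<mu>
  have "B \<mu> \<ge> 0" for \<mu> by (simp add: B_def sum_nonneg)
  then have B: "0 < 8 * (B \<mu> + 1)" for \<mu> by (simp add: add_nonneg_pos)
  define \<delta> where "\<delta> = Min (insert 1 ((\<lambda>\<mu>. norm (c \<mu>) / (8 * (B \<mu> + 1))) ` \<Lambda>))"
  have "0 < norm (c \<mu>) / (8 * (B \<mu> + 1))" if "\<mu> \<in> \<Lambda>" for \<mu>
    using assms(4)[OF that] B[of \<mu>] by (intro divide_pos_pos) auto
  then have "\<delta> > 0" using assms(1) by (simp add: \<delta>_def Min_gr_iff)
  moreover have "x0 \<in> L_set T \<omega>" if v: "norm v < \<delta>" and u: "x0 + v \<in> L_set T \<omega>" for v \<omega>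
  proof -
    have "(\<lambda>n. \<mu>^(\<omega> n)) \<longlonglongrightarrow> 1" if "\<mu> \<in> \<Lambda>" for \<mu>
    proof (rule eigenvalue_powers_tendsto_one[OF Q[OF that] assms(3) assms(4)[OF that] _ u])
      have "\<delta> \<le> norm (c \<mu>) / (8 * (B \<mu> + 1))"
        using assms(1) that by (simp add: \<delta>_def)
      with v have "norm v * (8 * (B \<mu> + 1)) < norm (c \<mu>)"
        using pos_less_divide_eq[OF B] by (metis order_less_le_trans)
      moreover have "norm v * (8 * (B \<mu> + 1)) = 8 * (B \<mu> * norm v) + 8 * norm v"
        by (simp add: algebra_simps)
      ultimately have "2 * (B \<mu> * norm v) \<le> norm (c \<mu>) / 4"
        using norm_ge_zero[of v] by linarith
      then show "2 * ((\<Sum>k\<le>degree (Q \<mu>). cmod (coeff (Q \<mu>) k)) * norm v) \<le> norm (c \<mu>) / 4"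
        by (simp only: B_def)
    qed
    then show ?thesis using assms(1,2,3) by (simp add: eigen_sum_in_L_setI)
  qed
  ultimately show ?thesis by (rule that)
qed

lemma Rec_eq_UNIV:
  assumes "x0 \<in> Hr T" "x0 \<noteq> 0" shows "Rec T = UNIV"
proof -
  obtain \<omega> where \<omega>: "strict_mono \<omega>" "\<forall>n. 0 < \<omega> n" "x0 \<in> L_set T \<omega>"
    using assms(1) by (auto simp: Hr_def Rec_def)
  with assms have "closure (L_set T \<omega>) = UNIV" by (auto simp: Hr_def C_set_def)
  then have "L_set T \<omega> = UNIV" using closed_L_set closure_closed by metis
  then show ?thesis using \<omega> by (auto simp: Rec_def)
qed

lemma Hr_transfer:
  assumes "x0 \<in> Hr T" "Rec T = UNIV" "\<And>\<omega>. u \<in> L_set T \<omega> \<Longrightarrow> x0 \<in> L_set T \<omega>"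
  shows "u \<in> Hr T"
  using assms by (auto simp: Hr_def)

lemma poly_op_in_Hr:
  assumes "z \<in> Hr T" "Rec T = UNIV" "c > 0" "\<And>v. c * norm v \<le> norm (poly_op p v)"
  shows "poly_op p z \<in> Hr T"
proof (rule Hr_transfer[OF assms(1,2)])
  fix \<omega> assume "poly_op p z \<in> L_set T \<omega>"
  then have lim: "(\<lambda>n. norm ((T^^\<omega> n) (poly_op p z) - poly_op p z) / c) \<longlonglongrightarrow> 0"
    unfolding L_set_iff_norm by (rule tendsto_divide_zero)
  have bound: "norm (norm ((T^^\<omega> n) z - z)) \<le> norm ((T^^\<omega> n) (poly_op p z) - poly_op p z) / c" for n
  proof -
    have "c * norm ((T^^\<omega> n) z - z) \<le> norm ((T^^\<omega> n) (poly_op p z) - poly_op p z)"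
      using assms(4)[of "(T^^\<omega> n) z - z"] by (simp only: poly_op_right_diff poly_op_Tn)
    then show ?thesis using assms(3) by (simp add: pos_le_divide_eq mult.commute)
  qed
  show "z \<in> L_set T \<omega>"
    unfolding L_set_iff_norm by (rule Lim_null_comparison[OF always_eventually[OF allI[OF bound]] lim])
qed

lemma closure_Hr_eq_UNIV_if_zero:
  assumes "0 \<in> Hr T" "closure (Rec T) = UNIV"
  shows "closure (Hr T) = UNIV"
proof -
  have "Rec T \<subseteq> Hr T"
    using assms(1) zero_in_L_set by (auto simp: Hr_def)
  then show ?thesis using assms(2) closure_mono by blast
qed

subsection \<open>Vectors not annihilated by any polynomial\<close>

lemma poly_op_in_closure_Hr:
  assumes "z \<in> Hr T" "Rec T = UNIV"
  shows "poly_op p z \<in> closure (Hr T)"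
proof (cases "p = 0")
  case True
  have "smul a z \<in> Hr T" if "a \<in> UNIV - {0}" for a
    using that poly_op_in_Hr[OF assms, of "cmod a" "[:a:]"] by (simp add: poly_op_const norm_cscale)
  then have "(\<lambda>a. smul a z) 0 \<in> closure (Hr T)"
    by (intro limpt_image_in_closure[where S = UNIV and F = "{0}"] continuous_on_cscale continuous_on_id) auto
  with True show ?thesis by simp
next
  case False
  text \<open>Rescaling the variable by s > 1 moves the roots of p off the unit circle.\<close>
  define f where "f s = poly_op (pcompose p [:0, complex_of_real s:]) z" for s
  have "f s \<in> Hr T" if s: "s \<in> {1<..} - cmod ` {r. poly p r = 0}" for s
  proof -
    have "poly (pcompose p [:0, complex_of_real s:]) \<zeta> \<noteq> 0" if "cmod \<zeta> = 1" for \<zeta>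
    proof
      assume "poly (pcompose p [:0, complex_of_real s:]) \<zeta> = 0"
      then have "of_real s * \<zeta> \<in> {r. poly p r = 0}" by (simp add: poly_pcompose mult.commute)
      then have "cmod (of_real s * \<zeta>) \<in> cmod ` {r. poly p r = 0}" by (rule imageI)
      with s that show False by (simp add: norm_mult)
    qed
    moreover from this[of 1] have "pcompose p [:0, complex_of_real s:] \<noteq> 0" by auto
    ultimately obtain c where "c > 0" "\<forall>u. c * norm u \<le> norm (poly_op (pcompose p [:0, complex_of_real s:]) u)"
      using poly_op_bounded_below by blast
    then show ?thesis unfolding f_def by (intro poly_op_in_Hr[OF assms]) auto
  qed
  moreover have "continuous_on UNIV f"
  proof -
    have "degree (pcompose p [:0, complex_of_real s:]) \<le> degree p" for s
    proof -
      have "degree [:0, complex_of_real s:] \<le> 1" by (rule order_trans[OF degree_pCons_le]) simp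
      then show ?thesis by (metis degree_pcompose_le mult.right_neutral mult_le_mono2 order_trans)
    qed
    then have "f = (\<lambda>s. \<Sum>k\<le>degree p. smul (complex_of_real s ^ k * coeff p k) ((T^^k) z))"
      unfolding f_def coeff_pcompose_linear[symmetric] by (intro ext poly_op_upto)
    then show ?thesis by (simp only:) (intro continuous_on_sum continuous_on_cscale continuous_intros)
  qed
  moreover have "(1::real) islimpt {1<..}"
  proof -
    have "{1<..} - {1::real} = {1<..}" by auto
    then show ?thesis by (simp add: islimpt_in_closure)
  qed
  moreover have "finite (cmod ` {r. poly p r = 0})"
    using False by (simp add: poly_roots_finite)
  ultimately have "f 1 \<in> closure (Hr T)" by (intro limpt_image_in_closure)
  then show ?thesis by (simp add: f_def)
qed

lemma orbit_inj_independent: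
  assumes "\<not> annihilated z"
  shows "inj (\<lambda>k. (T^^k) z)" "V.independent (range (\<lambda>k. (T^^k) z))"
proof -
  define f where "f k = (T^^k) z" for k
  show inj: "inj (\<lambda>k. (T^^k) z)"
  proof (rule injI)
    fix i j assume "(T^^i) z = (T^^j) z"
    then have "poly_op (monom 1 i - monom 1 j) z = 0" by (simp add: poly_op_diff poly_op_monom)
    then have "coeff (monom (1::complex) i - monom 1 j) i = 0"
      using assms unfolding annihilated_def by (metis coeff_0)
    then show "i = j" by (auto split: if_splits)
  qed
  show "V.independent (range (\<lambda>k. (T^^k) z))"
  proof
    assume "V.dependent (range (\<lambda>k. (T^^k) z))"
    then obtain t u v where t: "finite t" "t \<subseteq> range f" "(\<Sum>v\<in>t. smul (u v) v) = 0" "v \<in> t" "u v \<noteq> 0"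
      unfolding V.dependent_explicit f_def by blast
    obtain K where K: "finite K" "t = f ` K" using finite_subset_image[OF t(1,2)] by blast
    define p where "p = (\<Sum>k\<in>K. monom (u (f k)) k)"
    have "poly_op p z = (\<Sum>k\<in>K. smul (u (f k)) (f k))"
      by (simp add: p_def poly_op_sum poly_op_monom f_def)
    also have "\<dots> = 0"
      using t(3) inj by (simp add: K(2) f_def sum.reindex inj_on_subset)
    finally have "poly_op p z = 0" .
    moreover obtain k where "k \<in> K" "f k = v" using K(2) t(4) by blast
    then have "coeff p k = u v" using K(1) by (simp add: p_def coeff_sum)
    ultimately show False using assms t(5) unfolding annihilated_def by (metis coeff_0)
  qed
qed

lemma cyclic_subspace_in_closure_Hr:
  assumes "z \<in> Hr T" "Rec T = UNIV" "\<not> annihilated z"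
  defines "M \<equiv> range (\<lambda>p. poly_op p z)"
  shows "inf_dim_subspace smul M" "T ` M \<subseteq> M" "M \<subseteq> closure (Hr T)"
proof -
  show "M \<subseteq> closure (Hr T)" unfolding M_def using poly_op_in_closure_Hr[OF assms(1,2)] by auto
  have "T (poly_op p z) = poly_op (pCons 0 p) z" for p by (simp add: poly_op_pCons)
  then show "T ` M \<subseteq> M" unfolding M_def by auto
  have "V.subspace M"
  proof (rule V.subspaceI)
    show "0 \<in> M" unfolding M_def by (metis poly_op_0 rangeI)
    show "x + y \<in> M" if "x \<in> M" "y \<in> M" for x y
      using that unfolding M_def by (auto simp flip: poly_op_add)
    show "smul c x \<in> M" if "x \<in> M" for c x
      using that unfolding M_def by (auto simp flip: poly_op_smult)
  qed
  moreover have "\<not> (\<exists>B. finite B \<and> V.span B = M)"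
  proof
    assume "\<exists>B. finite B \<and> V.span B = M"
    then obtain B where B: "finite B" "V.span B = M" by blast
    let ?S = "(\<lambda>k. (T^^k) z) ` {..card B}"
    have "V.independent ?S"
      using orbit_inj_independent(2)[OF assms(3)] by (rule V.independent_mono) auto
    moreover have "?S \<subseteq> V.span B"
      unfolding B(2) M_def by (auto intro: range_eqI[of _ _ "monom 1 k" for k] simp: poly_op_monom)
    ultimately have "card ?S \<le> card B" using V.independent_span_bound[OF B(1)] by blast
    moreover have "card ?S = Suc (card B)"
      using orbit_inj_independent(1)[OF assms(3)] by (simp add: card_image inj_on_subset)
    ultimately show False by simp
  qed
  ultimately show "inf_dim_subspace smul M" by (simp add: inf_dim_subspace_def)
qed

subsection \<open>When every hyper-recurrent vector is annihilated\<close>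

lemma annihilated_perturbation:
  assumes "annihilated x0" "annihilated (x0 + smul t y)" "t \<noteq> 0"
  shows "annihilated y"
proof -
  obtain m q where mq: "m \<noteq> 0" "poly_op m x0 = 0" "q \<noteq> 0" "poly_op q (x0 + smul t y) = 0"
    using assms(1,2) unfolding annihilated_def by blast
  have "poly_op (m * q) x0 = 0" using mq(2) by (simp add: mult.commute[of m q] poly_op_mult)
  moreover have "poly_op (m * q) (x0 + smul t y) = 0" using mq(4) by (simp add: poly_op_mult)
  ultimately have "smul t (poly_op (m * q) y) = 0" by (simp add: poly_op_right_add poly_op_right_scale)
  then show ?thesis using mq(1,3) assms(3) unfolding annihilated_def by (intro exI[of _ "m * q"]) auto
qed

lemma finite_zeros_add_cscale:
  assumes "c \<noteq> 0" shows "finite {\<epsilon>. d + smul \<epsilon> c = 0}"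
proof (cases "\<exists>\<epsilon>0. d + smul \<epsilon>0 c = 0")
  case True
  then obtain \<epsilon>0 where \<epsilon>0: "d + smul \<epsilon>0 c = 0" by blast
  have "{\<epsilon>. d + smul \<epsilon> c = 0} \<subseteq> {\<epsilon>0}"
  proof
    fix \<epsilon> assume "\<epsilon> \<in> {\<epsilon>. d + smul \<epsilon> c = 0}"
    with \<epsilon>0 have "smul \<epsilon> c = smul \<epsilon>0 c" by (metis add_left_cancel mem_Collect_eq)
    with assms show "\<epsilon> \<in> {\<epsilon>0}" by (simp add: V.scale_cancel_right)
  qed
  then show ?thesis by (rule finite_subset) simp
qed simp

text \<open>w is the limit of w + \<epsilon> x0 as \<epsilon> \<rightarrow> 0, and for all but finitely many \<epsilon> no eigencomponent of
  x0 cancels in w + \<epsilon> x0, so that every \<omega> for which w + \<epsilon> x0 \<in> L(\<omega>) also has x0 \<in> L(\<omega>).\<close>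
lemma eigen_sum_in_closure_Hr:
  assumes "x0 \<in> Hr T" "Rec T = UNIV" "eigen_sum x0" "eigen_sum w"
  shows "w \<in> closure (Hr T)"
proof -
  obtain \<Lambda> c where c: "finite \<Lambda>" "x0 = (\<Sum>\<mu>\<in>\<Lambda>. c \<mu>)" "\<And>\<mu>. T (c \<mu>) = smul \<mu> (c \<mu>)"
    "\<And>\<mu>. \<mu> \<in> \<Lambda> \<longleftrightarrow> c \<mu> \<noteq> 0"
    using eigen_sum_normal_form[OF assms(3)] by metis
  obtain \<Lambda>' d where d: "finite \<Lambda>'" "w = (\<Sum>\<mu>\<in>\<Lambda>'. d \<mu>)" "\<And>\<mu>. T (d \<mu>) = smul \<mu> (d \<mu>)"
    "\<And>\<mu>. \<mu> \<in> \<Lambda>' \<longleftrightarrow> d \<mu> \<noteq> 0"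
    using eigen_sum_normal_form[OF assms(4)] by metis
  define U where "U = \<Lambda> \<union> \<Lambda>'"
  define e where "e \<epsilon> \<mu> = d \<mu> + smul \<epsilon> (c \<mu>)" for \<epsilon> \<mu>
  have "finite U" using c(1) d(1) by (simp add: U_def)
  have e_eigen: "T (e \<epsilon> \<mu>) = smul \<mu> (e \<epsilon> \<mu>)" for \<epsilon> \<mu>
    by (simp add: e_def L.add L.scale c(3) d(3) V.scale_right_distrib V.scale_left_commute)
  have e_sum: "w + smul \<epsilon> x0 = (\<Sum>\<mu>\<in>U. e \<epsilon> \<mu>)" for \<epsilon>
  proof -
    have "x0 = (\<Sum>\<mu>\<in>U. c \<mu>)" "w = (\<Sum>\<mu>\<in>U. d \<mu>)"
      unfolding c(2) d(2) U_def using c(1,4) d(1,4)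
      by (auto intro: sum.mono_neutral_left)
    then show ?thesis by (simp add: e_def sum.distrib V.scale_sum_right)
  qed
  define Bad where "Bad = (\<Union>\<mu>\<in>\<Lambda>. {\<epsilon>. e \<epsilon> \<mu> = 0})"
  have "finite Bad"
    unfolding Bad_def e_def using c(1,4) by (auto intro: finite_zeros_add_cscale)
  have "w + smul \<epsilon> x0 \<in> Hr T" if "\<epsilon> \<in> UNIV - Bad" for \<epsilon>
  proof (rule Hr_transfer[OF assms(1,2)])
    fix \<omega> assume "w + smul \<epsilon> x0 \<in> L_set T \<omega>"
    then have "(\<lambda>n. \<mu>^(\<omega> n)) \<longlonglongrightarrow> 1" if "\<mu> \<in> \<Lambda>" for \<mu>
      using \<open>finite U\<close> e_eigen that \<open>\<epsilon> \<in> UNIV - Bad\<close>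
      by (intro eigen_sum_in_L_setD[of U "e \<epsilon>"]) (auto simp: e_sum U_def Bad_def)
    then show "x0 \<in> L_set T \<omega>" unfolding c(2) using c(1,3) by (intro eigen_sum_in_L_setI)
  qed
  then have "(\<lambda>\<epsilon>. w + smul \<epsilon> x0) 0 \<in> closure (Hr T)"
    using \<open>finite Bad\<close>
    by (intro limpt_image_in_closure[where S = UNIV] continuous_on_add continuous_on_const
        continuous_on_cscale continuous_on_id) auto
  then show ?thesis by simp
qed

lemma all_annihilated_if_Hr_annihilated:
  assumes "x0 \<in> Hr T" "x0 \<noteq> 0" "\<forall>z\<in>Hr T. annihilated z"
  shows "annihilated y"
proof -
  have "Rec T = UNIV" using assms(1,2) by (rule Rec_eq_UNIV)
  have "annihilated x0" using assms(1,3) by blast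
  then have "eigen_sum x0" unfolding annihilated_def using annihilated_imp_eigen_sum by blast
  then obtain \<Lambda> c where dec: "finite \<Lambda>" "x0 = (\<Sum>\<mu>\<in>\<Lambda>. c \<mu>)" "\<And>\<mu>. T (c \<mu>) = smul \<mu> (c \<mu>)"
    "\<And>\<mu>. \<mu> \<in> \<Lambda> \<Longrightarrow> c \<mu> \<noteq> 0"
    using eigen_sum_normal_form by metis
  obtain \<delta> where \<delta>: "\<delta> > 0" "\<And>v \<omega>. norm v < \<delta> \<Longrightarrow> x0 + v \<in> L_set T \<omega> \<Longrightarrow> x0 \<in> L_set T \<omega>"
    using eigen_sum_L_set_perturbation[OF dec] by blast
  have "norm y + 1 > 0" using norm_ge_zero[of y] by linarith
  define r where "r = \<delta> / 2 / (norm y + 1)"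
  have "r > 0" unfolding r_def using \<delta>(1) \<open>norm y + 1 > 0\<close> by (intro divide_pos_pos) auto
  define t where "t = complex_of_real r"
  have "t \<noteq> 0" using \<open>r > 0\<close> by (simp add: t_def)
  have "norm (smul t y) = r * norm y" using \<open>r > 0\<close> by (simp add: t_def norm_cscale)
  also have "\<dots> \<le> r * (norm y + 1)" using \<open>r > 0\<close> by (intro mult_left_mono) auto
  also have "\<dots> = \<delta> / 2"
    unfolding r_def using \<open>norm y + 1 > 0\<close> by (metis less_irrefl nonzero_mult_div_cancel_right times_divide_eq_left)
  also have "\<dots> < \<delta>" using \<delta>(1) by simp
  finally have "x0 + smul t y \<in> Hr T"
    using \<delta>(2) by (intro Hr_transfer[OF assms(1) \<open>Rec T = UNIV\<close>])
  then show ?thesis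
    using assms(3) \<open>annihilated x0\<close> \<open>t \<noteq> 0\<close> by (blast intro: annihilated_perturbation)
qed

lemma closure_Hr_eq_UNIV_if_all_annihilated:
  assumes "x0 \<in> Hr T" "x0 \<noteq> 0" "\<forall>z\<in>Hr T. annihilated z"
  shows "closure (Hr T) = UNIV"
proof -
  have "eigen_sum w" for w
    using all_annihilated_if_Hr_annihilated[OF assms] annihilated_imp_eigen_sum
    unfolding annihilated_def by blast
  then show ?thesis
    using eigen_sum_in_closure_Hr[OF assms(1) Rec_eq_UNIV[OF assms(1,2)]] by blast
qed

end

theorem proposition5p4:
  fixes smul :: "complex \<Rightarrow> 'a::banach \<Rightarrow> 'a" and T :: "'a \<Rightarrow> 'a"
  assumes "complex_banach_structure smul"
    and "\<not> (\<exists>B. finite B \<and> module.span smul B = UNIV)"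
    and "Vector_Spaces.linear smul smul T"
    and "\<And>x. norm (T x) = norm x"
    and "surj T"
    and "hyper_recurrent T"
  shows "\<exists>M. inf_dim_subspace smul M \<and> T ` M \<subseteq> M \<and> M \<subseteq> closure (Hr T)"
proof -
  interpret complex_isometry smul T
    using assms(1,3,4) by (rule complex_isometry.intro)
  obtain x0 where x0: "x0 \<in> Hr T" using assms(6) by (auto simp: hyper_recurrent_def)
  show ?thesis
  proof (cases "\<forall>z\<in>Hr T. annihilated z")
    case False
    then obtain z where z: "z \<in> Hr T" "\<not> annihilated z" by blast
    then have "z \<noteq> 0" by (metis annihilated_def one_neq_zero poly_op_right_zero)
    with z show ?thesis
      using cyclic_subspace_in_closure_Hr[OF z(1) Rec_eq_UNIV[OF z(1)]] by blast
  next
    case True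
    have "closure (Hr T) = UNIV"
    proof (cases "x0 = 0")
      case True
      with x0 assms(6) show ?thesis
        by (intro closure_Hr_eq_UNIV_if_zero) (auto simp: hyper_recurrent_def)
    qed (use x0 True closure_Hr_eq_UNIV_if_all_annihilated in blast)
    with assms(2) show ?thesis
      by (intro exI[of _ UNIV]) (simp add: inf_dim_subspace_def V.subspace_UNIV)
  qed
qed

end
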